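(* Let $G$ be a graph with a length-function $\ell$. The set of cycles of $G$ that are fully geodesic in $G$ generates the cycle space of $G$ (over $\mathbb{F}_2$).
   Context: All graphs are finite; parallel edges are allowed, loops are not; a cycle may consist of two vertices joined by two parallel edges. A length-function on a graph $G$ is a map $\ell:E(G)\to\mathbb{R}^+$ (strictly positive reals); $\ell(H)=\sum_{e\in E(H)}\ell(e)$ for subgraphs $H$, which carry the restricted length-function. $\mathrm{sd}_G(A)$ is the minimum of $\ell(S)$ over connected subgraphs $S\subseteq G$ with $A\subseteq V(S)$ ($\infty$ if none). $H\subseteq G$ is $k$-geodesic in $G$ if $\mathrm{sd}_H(A)=\mathrm{sd}_G(A)$ for all $A\subseteq V(H)$ with $|A|\le k$, and fully geodesic if it is $k$-geodesic for every $k\in\mathbb{N}$. The cycle space of $G$ is the $\mathbb{F}_2$-vector space of edge sets of $G$ in which every vertex has even degree, with symmetric difference as addition. *)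

theory Defs
  imports Complex_Main "HOL-Library.Extended_Real"
begin

text \<open>A finite multigraph: vertex set V, edge set E, and an incidence map
  ends assigning to each edge its set of two distinct endvertices
  (parallel edges allowed, loops excluded).\<close>

definition graph :: "'v set \<Rightarrow> 'e set \<Rightarrow> ('e \<Rightarrow> 'v set) \<Rightarrow> bool" where
  "graph V E ends \<longleftrightarrow> finite V \<and> finite E \<and>
     (\<forall>e\<in>E. ends e \<subseteq> V \<and> card (ends e) = 2)"

definition subgraph :: "'v set \<Rightarrow> 'e set \<Rightarrow> ('e \<Rightarrow> 'v set) \<Rightarrow> 'v set \<times> 'e set \<Rightarrow> bool" where
  "subgraph V E ends H \<longleftrightarrow> fst H \<subseteq> V \<and> snd H \<subseteq> E \<and> (\<forall>e\<in>snd H. ends e \<subseteq> fst H)"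

definition connected_sg :: "('e \<Rightarrow> 'v set) \<Rightarrow> 'v set \<times> 'e set \<Rightarrow> bool" where
  "connected_sg ends H \<longleftrightarrow> fst H \<noteq> {} \<and>
     (\<forall>X. X \<noteq> {} \<and> X \<subset> fst H \<longrightarrow>
        (\<exists>e\<in>snd H. ends e \<inter> X \<noteq> {} \<and> ends e - X \<noteq> {}))"

definition edge_length :: "('e \<Rightarrow> real) \<Rightarrow> 'e set \<Rightarrow> real" where
  "edge_length len F = (\<Sum>e\<in>F. len e)"

text \<open>Steiner distance sd_H(A) in H (infinity if no connected subgraph contains A).\<close>
definition sd :: "('e \<Rightarrow> 'v set) \<Rightarrow> ('e \<Rightarrow> real) \<Rightarrow> 'v set \<times> 'e set \<Rightarrow> 'v set \<Rightarrow> ereal" where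
  "sd ends len H A = Inf {ereal (edge_length len (snd S)) | S.
      subgraph (fst H) (snd H) ends S \<and> connected_sg ends S \<and> A \<subseteq> fst S}"

definition k_geodesic :: "'v set \<Rightarrow> 'e set \<Rightarrow> ('e \<Rightarrow> 'v set) \<Rightarrow> ('e \<Rightarrow> real) \<Rightarrow> nat \<Rightarrow> 'v set \<times> 'e set \<Rightarrow> bool" where
  "k_geodesic V E ends len k H \<longleftrightarrow> subgraph V E ends H \<and>
     (\<forall>A. A \<subseteq> fst H \<and> finite A \<and> card A \<le> k \<longrightarrow> sd ends len H A = sd ends len (V, E) A)"

definition fully_geodesic :: "'v set \<Rightarrow> 'e set \<Rightarrow> ('e \<Rightarrow> 'v set) \<Rightarrow> ('e \<Rightarrow> real) \<Rightarrow> 'v set \<times> 'e set \<Rightarrow> bool" where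
  "fully_geodesic V E ends len H \<longleftrightarrow> (\<forall>k. k_geodesic V E ends len k H)"

definition is_cycle :: "'v set \<Rightarrow> 'e set \<Rightarrow> ('e \<Rightarrow> 'v set) \<Rightarrow> 'v set \<times> 'e set \<Rightarrow> bool" where
  "is_cycle V E ends C \<longleftrightarrow> subgraph V E ends C \<and> connected_sg ends C \<and>
     (\<forall>v\<in>fst C. card {e\<in>snd C. v \<in> ends e} = 2)"

definition cycle_space :: "'v set \<Rightarrow> 'e set \<Rightarrow> ('e \<Rightarrow> 'v set) \<Rightarrow> 'e set set" where
  "cycle_space V E ends = {F. F \<subseteq> E \<and> (\<forall>v\<in>V. even (card {e\<in>F. v \<in> ends e}))}"

text \<open>F_2-sum (iterated symmetric difference) of a finite family of edge sets.\<close>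
definition sym_sum :: "'e set set \<Rightarrow> 'e set" where
  "sym_sum DD = {e. odd (card {D\<in>DD. e \<in> D})}"

end

theory Submission
  imports Defs
begin

text \<open>Suppose some element of the cycle space is not a sum of fully geodesic cycles, and take
  such an element \<open>F\<close> of minimal length. \<open>F\<close> contains a cycle \<open>C\<close>, and \<open>C = F\<close>,
  since otherwise \<open>F\<close> is the sum of the shorter elements \<open>C\<close> and \<open>F - C\<close>. As \<open>C\<close> is
  not fully geodesic, some set \<open>A\<close> of its vertices lies in a connected subgraph \<open>S\<close> of the
  graph that is shorter than every connected subgraph of \<open>C\<close> containing \<open>A\<close>. The vertices
  of \<open>A\<close> cut \<open>C\<close> into arcs. Closing each arc by a path in \<open>S\<close> between its ends gives an
  even edge set shorter than \<open>C\<close>, because the complementary arc contains \<open>A\<close> and is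
  therefore longer than \<open>S\<close>. The sum of these sets is \<open>C\<close> plus an even edge set inside
  \<open>S\<close>, which is shorter than \<open>C\<close> as well; so \<open>C = F\<close> is a sum of shorter elements
  after all.\<close>

section \<open>Parity and sums over \<open>\<bbbF>\<^sub>2\<close>\<close>

definition odd_vertices :: "('e \<Rightarrow> 'v set) \<Rightarrow> 'e set \<Rightarrow> 'v set" where
  "odd_vertices ends F = {v. odd (card {e\<in>F. v \<in> ends e})}"

lemma even_card_sym_diff:
  assumes "finite X" "finite Y"
  shows "even (card (sym_diff X Y)) \<longleftrightarrow> (even (card X) \<longleftrightarrow> even (card Y))"
proof -
  have "card (sym_diff X Y) = card (X - Y) + card (Y - X)"
    using assms by (intro card_Un_disjoint) auto
  moreover have "card (X - Y) = card X - card (X \<inter> Y)" "card (Y - X) = card Y - card (X \<inter> Y)"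
    using assms by (simp_all add: card_Diff_subset_Int Int_commute)
  moreover have "card (X \<inter> Y) \<le> card X" "card (X \<inter> Y) \<le> card Y"
    using assms by (simp_all add: card_mono)
  ultimately have "card (sym_diff X Y) + 2 * card (X \<inter> Y) = card X + card Y"
    by simp
  then show ?thesis
    by (metis even_add even_mult_iff even_numeral)
qed

lemma odd_vertices_sym_diff:
  assumes "finite F" "finite G"
  shows "odd_vertices ends (sym_diff F G) = sym_diff (odd_vertices ends F) (odd_vertices ends G)"
proof -
  have "{e \<in> sym_diff F G. v \<in> ends e} = sym_diff {e\<in>F. v \<in> ends e} {e\<in>G. v \<in> ends e}" for v
    by auto
  then show ?thesis
    unfolding odd_vertices_def using assms by (auto simp: even_card_sym_diff)
qed

lemma odd_vertices_empty [simp]: "odd_vertices ends {} = {}"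
  by (simp add: odd_vertices_def)

lemma odd_vertices_singleton: "odd_vertices ends {f} = ends f"
proof -
  have "{e\<in>{f}. v \<in> ends e} = (if v \<in> ends f then {f} else {})" for v
    by auto
  then show ?thesis
    unfolding odd_vertices_def by auto
qed

lemma sym_diff_Un_disjoint:
  "A \<inter> B = {} \<Longrightarrow> sym_diff (A \<union> B) (sym_diff C D) = sym_diff (sym_diff A C) (sym_diff B D)"
  by auto

lemma cycle_space_iff:
  assumes "graph V E ends"
  shows "F \<in> cycle_space V E ends \<longleftrightarrow> F \<subseteq> E \<and> odd_vertices ends F = {}"
proof -
  have "{e\<in>F. v \<in> ends e} = {}" if "F \<subseteq> E" "v \<notin> V" for v
    using assms that unfolding graph_def by auto
  then show ?thesis
    unfolding cycle_space_def odd_vertices_def by fastforce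
qed

lemma cycle_space_sym_diff:
  assumes "graph V E ends" "F \<in> cycle_space V E ends" "G \<in> cycle_space V E ends"
  shows "sym_diff F G \<in> cycle_space V E ends"
proof -
  have "finite F" "finite G"
    using assms unfolding cycle_space_def graph_def by (auto intro: finite_subset)
  then show ?thesis
    using assms by (auto simp: cycle_space_iff odd_vertices_sym_diff)
qed

lemma sym_sum_sym_diff:
  assumes "finite A" "finite B"
  shows "sym_sum (sym_diff A B) = sym_diff (sym_sum A) (sym_sum B)"
proof -
  have "{D \<in> sym_diff A B. e \<in> D} = sym_diff {D\<in>A. e \<in> D} {D\<in>B. e \<in> D}" for e
    by auto
  then show ?thesis
    unfolding sym_sum_def using assms by (auto simp: even_card_sym_diff)
qed

lemma sym_sum_empty [simp]: "sym_sum {} = {}"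
  by (simp add: sym_sum_def)

lemma sym_sum_singleton [simp]: "sym_sum {X} = X"
proof -
  have "{D\<in>{X}. e \<in> D} = (if e \<in> X then {X} else {})" for e
    by auto
  then show ?thesis
    unfolding sym_sum_def by auto
qed

definition sym_span :: "'e set set \<Rightarrow> 'e set set" where
  "sym_span Gen = {sym_sum DD | DD. finite DD \<and> DD \<subseteq> Gen}"

lemma sym_span_empty: "{} \<in> sym_span Gen"
  unfolding sym_span_def by (intro CollectI exI[of _ "{}"]) simp

lemma sym_span_generator: "X \<in> Gen \<Longrightarrow> X \<in> sym_span Gen"
  unfolding sym_span_def by (intro CollectI exI[of _ "{X}"]) simp

lemma sym_span_sym_diff:
  assumes "X \<in> sym_span Gen" "Y \<in> sym_span Gen"
  shows "sym_diff X Y \<in> sym_span Gen"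
proof -
  obtain A B where "X = sym_sum A" "finite A" "A \<subseteq> Gen" "Y = sym_sum B" "finite B" "B \<subseteq> Gen"
    using assms unfolding sym_span_def by blast
  then have "sym_diff X Y = sym_sum (sym_diff A B)" "finite (sym_diff A B)" "sym_diff A B \<subseteq> Gen"
    by (auto simp: sym_sum_sym_diff)
  then show ?thesis
    unfolding sym_span_def by blast
qed

lemma sym_span_least:
  assumes "Gen \<subseteq> W" "{} \<in> W" "\<And>X Y. X \<in> W \<Longrightarrow> Y \<in> W \<Longrightarrow> sym_diff X Y \<in> W"
  shows "sym_span Gen \<subseteq> W"
proof -
  have "sym_sum DD \<in> W" if "finite DD" "DD \<subseteq> Gen" for DD
    using that
  proof (induction DD rule: finite_induct)
    case (insert X DD)
    have "insert X DD = sym_diff {X} DD"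
      using insert.hyps by auto
    then have "sym_sum (insert X DD) = sym_diff (sym_sum {X}) (sym_sum DD)"
      using insert.hyps by (simp only: sym_sum_sym_diff finite.emptyI finite.insertI)
    then show ?case
      using insert assms by auto
  qed (simp add: assms)
  then show ?thesis
    unfolding sym_span_def by blast
qed

lemma edge_length_nonneg: "\<forall>e\<in>X. 0 < len e \<Longrightarrow> 0 \<le> edge_length len X"
  unfolding edge_length_def by (simp add: less_imp_le sum_nonneg)

lemma edge_length_mono:
  assumes "finite Y" "X \<subseteq> Y" "\<forall>e\<in>Y. 0 < len e"
  shows "edge_length len X \<le> edge_length len Y"
  unfolding edge_length_def using assms by (intro sum_mono2) (auto intro: less_imp_le)

lemma edge_length_psubset:
  assumes "finite Y" "X \<subset> Y" "\<forall>e\<in>Y. 0 < len e"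
  shows "edge_length len X < edge_length len Y"
proof -
  obtain b where "b \<in> Y - X"
    using assms(2) by blast
  then show ?thesis
    unfolding edge_length_def using assms by (intro sum_strict_mono2[of Y X b]) (auto intro: less_imp_le)
qed

lemma edge_length_sym_diff_le:
  assumes "finite X" "finite Y" "\<forall>e\<in>X \<union> Y. 0 < len e"
  shows "edge_length len (sym_diff X Y) \<le> edge_length len X + edge_length len Y"
proof -
  have "edge_length len (sym_diff X Y) = edge_length len (X - Y) + edge_length len (Y - X)"
    unfolding edge_length_def using assms by (intro sum.union_disjoint) auto
  also have "\<dots> \<le> edge_length len X + edge_length len Y"
    using assms by (intro add_mono edge_length_mono) auto
  finally show ?thesis .
qed

section \<open>Closed walks\<close>

lemma walk_connected:
  assumes "\<And>i. ends (q i) = {p i, p (Suc i)}"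
  shows "connected_sg ends (p ` {s..s+L}, q ` {s..<s+L})"
  unfolding connected_sg_def fst_conv snd_conv
proof (intro conjI allI impI)
  show "p ` {s..s + L} \<noteq> {}"
    by auto
next
  fix X assume X: "X \<noteq> {} \<and> X \<subset> p ` {s..s + L}"
  obtain i where i: "i \<in> {s..s+L}" "p i \<in> X"
    using X by blast
  obtain j where j: "j \<in> {s..s+L}" "p j \<notin> X"
    using X by blast
  have "\<exists>k\<in>{s..<s+L}. (p k \<in> X) \<noteq> (p (Suc k) \<in> X)"
  proof (rule ccontr)
    assume "\<not> ?thesis"
    then have same: "m \<le> L \<Longrightarrow> (p (s+m) \<in> X) = (p s \<in> X)" for m
      by (induction m) auto
    have "i - s \<le> L" "j - s \<le> L"
      using i(1) j(1) by auto
    then have "(p i \<in> X) = (p s \<in> X)" "(p j \<in> X) = (p s \<in> X)"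
      using same i(1) j(1) by force+
    then show False
      using i j by simp
  qed
  then obtain k where "k \<in> {s..<s+L}" "(p k \<in> X) \<noteq> (p (Suc k) \<in> X)"
    by blast
  then show "\<exists>e\<in>q ` {s..<s + L}. ends e \<inter> X \<noteq> {} \<and> ends e - X \<noteq> {}"
    using assms by (intro bexI[of _ "q k"]) auto
qed

lemma walk_odd_vertices:
  assumes "\<And>i. ends (q i) = {p i, p (Suc i)}" "\<And>i. p i \<noteq> p (Suc i)"
  shows "inj_on q {s..<s+L} \<Longrightarrow> odd_vertices ends (q ` {s..<s+L}) = sym_diff {p s} {p (s+L)}"
proof (induction L)
  case (Suc L)
  have "q (s+L) \<notin> q ` {s..<s+L}"
  proof
    assume "q (s+L) \<in> q ` {s..<s+L}"
    then obtain x where "x \<in> {s..<s+L}" "q (s+L) = q x"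
      by auto
    with inj_onD[OF Suc.prems this(2)] show False
      by auto
  qed
  then have split: "q ` {s..<s + Suc L} = sym_diff (q ` {s..<s+L}) {q (s+L)}"
    by (auto simp: atLeastLessThanSuc)
  have "inj_on q {s..<s+L}"
    using Suc.prems by (rule inj_on_subset) auto
  then have IH: "odd_vertices ends (q ` {s..<s+L}) = sym_diff {p s} {p (s+L)}"
    by (rule Suc.IH)
  have "odd_vertices ends (q ` {s..<s + Suc L})
      = sym_diff (odd_vertices ends (q ` {s..<s+L})) (odd_vertices ends {q (s+L)})"
    unfolding split by (rule odd_vertices_sym_diff) auto
  also have "\<dots> = sym_diff (sym_diff {p s} {p (s+L)}) {p (s+L), p (Suc (s+L))}"
    unfolding IH odd_vertices_singleton assms(1) ..
  also have "\<dots> = sym_diff {p s} {p (s + Suc L)}"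
    using assms(2)[of "s+L"] by auto
  finally show ?case .
qed simp

lemma ex_mod_eq_in_window:
  assumes "(n::nat) > 0"
  shows "\<exists>z. s \<le> z \<and> z < s + n \<and> z mod n = x mod n"
proof -
  define z where "z = s + ((x mod n + n - s mod n) mod n)"
  have "z mod n = (s mod n + (x mod n + n - s mod n)) mod n"
    unfolding z_def by (simp only: mod_add_right_eq mod_add_left_eq)
  also have "s mod n + (x mod n + n - s mod n) = x mod n + n"
    using assms mod_less_divisor[of n s] by linarith
  finally show ?thesis
    using assms by (intro exI[of _ z]) (auto simp: z_def)
qed

lemma mod_eq_in_window_imp_eq:
  assumes "(x::nat) mod n = y mod n" "s \<le> x" "x < s + n" "s \<le> y" "y < s + n"
  shows "x = y"
proof (cases "y \<le> x")
  case True
  then obtain k where "x = y + n * k"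
    using assms(1) by (metis mod_eq_nat1E)
  then show ?thesis
    using assms by (cases k) auto
next
  case False
  then obtain k where "y = x + n * k"
    using assms(1) by (metis mod_eq_nat2E nat_le_linear)
  then show ?thesis
    using assms by (cases k) auto
qed

lemma mod_Suc_eq_iff: "Suc i mod n = Suc j mod n \<longleftrightarrow> i mod n = j mod (n::nat)"
  by (simp only: nat_mod_eq_iff) simp

lemma ex_last_before:
  assumes "P (0::nat)" "0 < t"
  shows "\<exists>s<t. P s \<and> (\<forall>i. s < i \<and> i < t \<longrightarrow> \<not> P i)"
proof -
  define s where "s = (GREATEST i. i < t \<and> P i)"
  have "s < t \<and> P s"
    unfolding s_def by (rule GreatestI_nat[where k = 0 and b = t]) (use assms in auto)
  moreover have "i \<le> s" if "i < t" "P i" for i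
    unfolding s_def by (rule Greatest_le_nat[where b = t]) (use that in auto)
  ultimately show ?thesis
    using not_le by blast
qed

lemma range_periodic_window:
  assumes "\<And>i j. f i = f j \<longleftrightarrow> i mod n = j mod n" "(n::nat) > 0"
  shows "range f = f ` {s..<s+n}"
proof -
  have "f x \<in> f ` {s..<s+n}" for x
    using ex_mod_eq_in_window[OF assms(2), of s x] assms(1) by (metis atLeastLessThan_iff image_eqI)
  then show ?thesis
    by auto
qed

lemma inj_on_periodic_window:
  assumes "\<And>i j. f i = f j \<longleftrightarrow> i mod n = j mod n" "t \<le> s + (n::nat)"
  shows "inj_on f {s..<t}"
  using assms mod_eq_in_window_imp_eq[of _ n _ s] by (intro inj_onI) auto

text \<open>A cycle of length \<open>n\<close> is represented by an \<open>n\<close>-periodic closed walk, so that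
  its arcs are the images of index intervals.\<close>

locale cyclic_walk =
  fixes ends :: "'e \<Rightarrow> 'v set" and n :: nat and p :: "nat \<Rightarrow> 'v" and q :: "nat \<Rightarrow> 'e"
  assumes length_ge_2: "2 \<le> n"
    and vertex_eq_iff: "p i = p j \<longleftrightarrow> i mod n = j mod n"
    and edge_eq_iff: "q i = q j \<longleftrightarrow> i mod n = j mod n"
    and ends_edge: "ends (q i) = {p i, p (Suc i)}"
begin

lemma vertex_neq_Suc: "p i \<noteq> p (Suc i)"
  using length_ge_2 by (simp add: vertex_eq_iff mod_Suc)

lemma edge_neq_Suc: "q i \<noteq> q (Suc i)"
  using length_ge_2 by (simp add: edge_eq_iff mod_Suc)

lemma range_vertex_window: "range p = p ` {s..<s+n}"
  using length_ge_2 by (intro range_periodic_window vertex_eq_iff) simp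

lemma range_edge_window: "range q = q ` {s..<s+n}"
  using length_ge_2 by (intro range_periodic_window edge_eq_iff) simp

lemma inj_on_edge_window: "t \<le> s + n \<Longrightarrow> inj_on q {s..<t}"
  by (rule inj_on_periodic_window[OF edge_eq_iff])

lemma edge_windows_disjoint:
  assumes "t \<le> a + n"
  shows "q ` {a..<s} \<inter> q ` {s..<t} = {}"
proof -
  have "q x \<noteq> q y" if "x \<in> {a..<s}" "y \<in> {s..<t}" for x y
    using inj_onD[OF inj_on_edge_window[OF assms], of x y] that by auto
  then show ?thesis
    by blast
qed

lemma finite_edges: "finite (range q)"
  using range_edge_window[of 0] by simp

lemma odd_vertices_edges: "odd_vertices ends (range q) = {}"
  using walk_odd_vertices[of ends q p 0 n] ends_edge vertex_neq_Suc inj_on_edge_window[of n 0]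
    range_edge_window[of 0] vertex_eq_iff[of n 0] by simp

lemma connected: "connected_sg ends (range p, range q)"
proof -
  have "p ` {0..0+n} = range p"
    using range_vertex_window[of 0] by auto
  then show ?thesis
    using walk_connected[of ends q p 0 n] ends_edge range_edge_window[of 0] by simp
qed

lemma shift: "cyclic_walk ends n (\<lambda>i. p (i + r)) (\<lambda>i. q (i + r))"
  using length_ge_2 ends_edge by unfold_locales
    (simp_all add: vertex_eq_iff edge_eq_iff mod_add_cong mod_add_left_eq nat_mod_eq_iff)

lemma range_shift: "range (\<lambda>i. p (i + r)) = range p" "range (\<lambda>i. q (i + r)) = range q"
proof -
  have shifted: "range (\<lambda>i. f (i + r)) = range f" if window: "range f = f ` {r..<r+n}" for f :: "nat \<Rightarrow> 'a"
  proof
    show "range f \<subseteq> range (\<lambda>i. f (i + r))"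
    proof
      fix y assume "y \<in> range f"
      then obtain x where "r \<le> x" "y = f x"
        unfolding window by auto
      then show "y \<in> range (\<lambda>i. f (i + r))"
        by (intro image_eqI[of _ _ "x - r"]) auto
    qed
  qed auto
  show "range (\<lambda>i. p (i + r)) = range p"
    by (rule shifted) (rule range_vertex_window)
  show "range (\<lambda>i. q (i + r)) = range q"
    by (rule shifted) (rule range_edge_window)
qed

lemma is_cycle_range:
  assumes "graph V E ends" "range q \<subseteq> E"
  shows "is_cycle V E ends (range p, range q)"
  unfolding is_cycle_def fst_conv snd_conv
proof (intro conjI ballI)
  have "range p \<subseteq> V"
    using assms ends_edge unfolding graph_def by blast
  then show "subgraph V E ends (range p, range q)"
    unfolding subgraph_def using assms ends_edge by auto
  show "connected_sg ends (range p, range q)"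
    by (rule connected)
next
  fix v assume "v \<in> range p"
  then obtain i where i: "v = p i" "1 \<le> i"
    using range_vertex_window[of 1] by auto
  define k where "k = i - 1"
  have v: "v = p (Suc k)"
    using i by (simp add: k_def)
  have "{e \<in> range q. v \<in> ends e} = {q k, q (Suc k)}"
  proof (intro equalityI subsetI)
    fix e assume "e \<in> {e \<in> range q. v \<in> ends e}"
    then obtain m where "e = q m" "p (Suc k) = p m \<or> p (Suc k) = p (Suc m)"
      using v ends_edge by auto
    then show "e \<in> {q k, q (Suc k)}"
      by (auto simp: vertex_eq_iff edge_eq_iff mod_Suc_eq_iff)
  qed (use v ends_edge in auto)
  then show "card {e \<in> range q. v \<in> ends e} = 2"
    using edge_neq_Suc[of k] by simp
qed

end

section \<open>Finding a cycle\<close>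

lemma graph_other_end:
  assumes "graph V E ends" "e \<in> E" "v \<in> ends e"
  obtains w where "ends e = {v, w}" "w \<noteq> v"
proof -
  obtain a b where "ends e = {a, b}" "a \<noteq> b"
    using assms unfolding graph_def card_2_iff by blast
  then show ?thesis
    using assms(3) that by (metis doubleton_eq_iff insertE singletonD)
qed

definition path_in :: "'e set \<Rightarrow> ('e \<Rightarrow> 'v set) \<Rightarrow> nat \<Rightarrow> (nat \<Rightarrow> 'v) \<Rightarrow> (nat \<Rightarrow> 'e) \<Rightarrow> bool" where
  "path_in F ends L p q \<longleftrightarrow> inj_on p {..L} \<and> (\<forall>i<L. q i \<in> F \<and> ends (q i) = {p i, p (Suc i)})"

lemma path_in_length_le_card:
  assumes "graph V E ends" "F \<subseteq> E" "path_in F ends L p q" "1 \<le> L"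
  shows "L \<le> card V"
proof -
  have "p i \<in> V" if "i \<le> L" for i
  proof (cases "i < L")
    case True
    then have "q i \<in> E" "p i \<in> ends (q i)"
      using assms(2,3) unfolding path_in_def by auto
    then show ?thesis
      using assms(1) unfolding graph_def by blast
  next
    case False
    then have "i = Suc (L - 1)"
      using that assms(4) by simp
    moreover have "q (L - 1) \<in> E" "p (Suc (L - 1)) \<in> ends (q (L - 1))"
      using assms(2-4) unfolding path_in_def by auto
    ultimately show ?thesis
      using assms(1) unfolding graph_def by blast
  qed
  then have "card (p ` {..L}) \<le> card V"
    using assms(1) unfolding graph_def by (intro card_mono) auto
  moreover have "card (p ` {..L}) = Suc L"
    using assms(3) unfolding path_in_def by (simp add: card_image)
  ultimately show ?thesis
    by simp
qed

lemma path_in_extend: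
  assumes P: "path_in F ends L p q" and f: "f \<in> F" "ends f = {x, p 0}" and x: "x \<notin> p ` {..L}"
  shows "path_in F ends (Suc L) (\<lambda>i. if i = 0 then x else p (i - 1)) (\<lambda>i. if i = 0 then f else q (i - 1))"
  unfolding path_in_def
proof (intro conjI allI impI)
  have inj: "inj_on p {..L}"
    using P by (simp add: path_in_def)
  show "inj_on (\<lambda>i. if i = 0 then x else p (i - 1)) {..Suc L}"
  proof (rule inj_onI)
    fix a b assume ab: "a \<in> {..Suc L}" "b \<in> {..Suc L}"
      "(if a = 0 then x else p (a - 1)) = (if b = 0 then x else p (b - 1))"
    show "a = b"
    proof (cases "a = 0"; cases "b = 0")
      assume "a \<noteq> 0" "b \<noteq> 0"
      then have "a - 1 = b - 1"
        using ab inj_onD[OF inj, of "a - 1" "b - 1"] by auto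
      then show ?thesis
        using \<open>a \<noteq> 0\<close> \<open>b \<noteq> 0\<close> by simp
    qed (use ab x in \<open>auto simp: image_iff\<close>)
  qed
next
  fix i assume "i < Suc L"
  then show "(if i = 0 then f else q (i - 1)) \<in> F"
    "ends (if i = 0 then f else q (i - 1))
      = {if i = 0 then x else p (i - 1), if Suc i = 0 then x else p (Suc i - 1)}"
    using P f unfolding path_in_def by (auto simp: Suc_diff_eq_diff_pred)
qed

lemma path_in_vertex_eq_iff:
  "path_in F ends L p q \<Longrightarrow> x \<le> L \<Longrightarrow> y \<le> L \<Longrightarrow> p x = p y \<longleftrightarrow> x = y"
  unfolding path_in_def by (auto dest: inj_onD)

lemma path_in_edge_inj:
  assumes P: "path_in F ends L p q" and "a < L" "b < L" "q a = q b"
  shows "a = b"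
proof (rule ccontr)
  assume "a \<noteq> b"
  have p_eq: "x \<le> L \<Longrightarrow> y \<le> L \<Longrightarrow> p x = p y \<longleftrightarrow> x = y" for x y
    using P by (rule path_in_vertex_eq_iff)
  have "{p a, p (Suc a)} = {p b, p (Suc b)}"
    using P assms(2-4) unfolding path_in_def by metis
  then have "p a = p (Suc b)" "p (Suc a) = p b"
    using p_eq[of a b] p_eq[of "Suc a" "Suc b"] assms(2,3) \<open>a \<noteq> b\<close> by (auto simp: doubleton_eq_iff)
  then show False
    using p_eq[of a "Suc b"] p_eq[of "Suc a" b] assms(2,3) by simp
qed

lemma path_in_start_edge:
  assumes "path_in F ends L p q" "k < L" "p 0 \<in> ends (q k)"
  shows "k = 0"
proof -
  have "p 0 = p k \<or> p 0 = p (Suc k)"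
    using assms unfolding path_in_def by auto
  then show ?thesis
    using path_in_vertex_eq_iff[OF assms(1), of 0 k] path_in_vertex_eq_iff[OF assms(1), of 0 "Suc k"] assms(2)
    by auto
qed

lemma path_in_closing_edge_inj:
  assumes P: "path_in F ends L p q" and f: "f \<noteq> q 0" "p 0 \<in> ends f" and "j \<le> L"
  shows "inj_on (\<lambda>i. if i = j then f else q i) {..j}"
proof (rule inj_onI)
  fix a b assume ab: "a \<in> {..j}" "b \<in> {..j}"
    "(if a = j then f else q a) = (if b = j then f else q b)"
  have f_neq: "f \<noteq> q k" if "k < j" for k
    using path_in_start_edge[OF P, of k] f that assms(4) by auto
  show "a = b"
  proof (cases "a = j"; cases "b = j")
    assume "a \<noteq> j" "b \<noteq> j"
    then show ?thesis
      using path_in_edge_inj[OF P, of a b] ab assms(4) by auto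
  next
    assume "a = j" "b \<noteq> j"
    then have "f = q b" "b < j"
      using ab by auto
    then show ?thesis
      using f_neq by blast
  next
    assume "a \<noteq> j" "b = j"
    then have "f = q a" "a < j"
      using ab by auto
    then show ?thesis
      using f_neq by blast
  qed simp
qed

lemma cyclic_walk_mod:
  assumes "2 \<le> n" "inj_on p {..<n}" "inj_on q {..<n}"
    and "\<And>i. i < n \<Longrightarrow> ends (q i) = {p i, p (Suc i mod n)}"
  shows "cyclic_walk ends n (\<lambda>i. p (i mod n)) (\<lambda>i. q (i mod n))"
proof unfold_locales
  have "0 < n"
    using assms(1) by simp
  fix i j
  show "p (i mod n) = p (j mod n) \<longleftrightarrow> i mod n = j mod n"
    using inj_on_eq_iff[OF assms(2)] \<open>0 < n\<close> by simp
  show "q (i mod n) = q (j mod n) \<longleftrightarrow> i mod n = j mod n"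
    using inj_on_eq_iff[OF assms(3)] \<open>0 < n\<close> by simp
  show "ends (q (i mod n)) = {p (i mod n), p (Suc i mod n)}"
    using assms(4)[of "i mod n"] \<open>0 < n\<close> by (simp add: mod_Suc_eq)
qed (use assms in simp)

lemma path_in_close:
  assumes P: "path_in F ends L p q"
    and f: "f \<in> F" "f \<noteq> q 0" "ends f = {p j, p 0}" and j: "0 < j" "j \<le> L"
  shows "\<exists>n p' q'. cyclic_walk ends n p' q' \<and> range q' \<subseteq> F"
proof -
  define n where "n = Suc j"
  define q' where "q' i = (if i = j then f else q i)" for i
  have q_ends: "k < L \<Longrightarrow> q k \<in> F \<and> ends (q k) = {p k, p (Suc k)}" for k
    using P unfolding path_in_def by simp
  have "inj_on p {..<n}"
    using P j unfolding path_in_def n_def by (auto elim: inj_on_subset)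
  moreover have "inj_on q' {..<n}"
    unfolding q'_def n_def lessThan_Suc_atMost using path_in_closing_edge_inj[OF P f(2)] f(3) j(2) by simp
  moreover have "ends (q' i) = {p i, p (Suc i mod n)}" if "i < n" for i
    using that f q_ends[of i] j unfolding q'_def n_def by (auto simp: mod_Suc)
  ultimately have "cyclic_walk ends n (\<lambda>i. p (i mod n)) (\<lambda>i. q' (i mod n))"
    using j unfolding n_def by (intro cyclic_walk_mod) auto
  moreover have "q' i \<in> F" if "i < n" for i
    using that f q_ends[of i] j unfolding q'_def n_def by auto
  then have "range (\<lambda>i. q' (i mod n)) \<subseteq> F"
    unfolding n_def by auto
  ultimately show ?thesis
    by blast
qed

lemma ex_longest_path_in:
  assumes "graph V E ends" "F \<subseteq> E" "F \<noteq> {}"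
  obtains L p q where "path_in F ends L p q" "1 \<le> L"
    "\<forall>L' p' q'. path_in F ends L' p' q' \<and> 1 \<le> L' \<longrightarrow> L' \<le> L"
proof -
  define long where "long L \<longleftrightarrow> 1 \<le> L \<and> (\<exists>p q. path_in F ends L p q)" for L
  obtain f where f: "f \<in> F"
    using assms(3) by blast
  then have "card (ends f) = 2"
    using assms(1,2) unfolding graph_def by blast
  then obtain u w where uw: "ends f = {u, w}" "u \<noteq> w"
    unfolding card_2_iff by blast
  have "{..1::nat} = {0, 1}"
    by auto
  then have "path_in F ends 1 (\<lambda>i. if i = 0 then u else w) (\<lambda>_. f)"
    unfolding path_in_def using f uw by simp
  then have "long 1"
    unfolding long_def by blast
  moreover have "\<forall>L. long L \<longrightarrow> L \<le> card V"
    using path_in_length_le_card[OF assms(1,2)] unfolding long_def by blast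
  ultimately obtain L where L: "long L" "\<forall>L'. long L' \<longrightarrow> L' \<le> L"
    using Nat.ex_has_greatest_nat[of long 1 "card V"] by blast
  then obtain p q where "path_in F ends L p q" "1 \<le> L"
    unfolding long_def by blast
  moreover have "\<forall>L' p' q'. path_in F ends L' p' q' \<and> 1 \<le> L' \<longrightarrow> L' \<le> L"
    using L(2) unfolding long_def by blast
  ultimately show ?thesis
    by (rule that)
qed

lemma ex_cyclic_walk_in:
  assumes g: "graph V E ends" and F: "F \<subseteq> E" "F \<noteq> {}"
    and no_leaf: "\<And>v. card {e\<in>F. v \<in> ends e} \<noteq> 1"
  shows "\<exists>n p q. cyclic_walk ends n p q \<and> range q \<subseteq> F"
proof -
  obtain L p q where P: "path_in F ends L p q" "1 \<le> L"
    and longest: "\<forall>L' p' q'. path_in F ends L' p' q' \<and> 1 \<le> L' \<longrightarrow> L' \<le> L"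
    using ex_longest_path_in[OF g F] by blast
  have q0: "q 0 \<in> F" "p 0 \<in> ends (q 0)"
    using P unfolding path_in_def by auto
  have "{e\<in>F. p 0 \<in> ends e} \<noteq> {q 0}"
    using no_leaf[of "p 0"] by force
  then obtain f where f: "f \<in> F" "p 0 \<in> ends f" "f \<noteq> q 0"
    using q0 by blast
  moreover have "f \<in> E"
    using f F by blast
  ultimately obtain x where x: "ends f = {p 0, x}" "x \<noteq> p 0"
    using graph_other_end[OF g] by blast
  show ?thesis
  proof (cases "x \<in> p ` {..L}")
    case True
    then obtain j where "j \<le> L" "x = p j"
      by blast
    moreover have "j \<noteq> 0"
      by (rule notI) (use calculation x(2) in simp)
    ultimately show ?thesis
      using path_in_close[OF P(1) f(1,3), of j] x by (simp add: insert_commute)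
  next
    case False
    then have "path_in F ends (Suc L) (\<lambda>i. if i = 0 then x else p (i - 1)) (\<lambda>i. if i = 0 then f else q (i - 1))
        \<and> 1 \<le> Suc L"
      using path_in_extend[OF P(1) f(1)] x by (simp add: insert_commute)
    then have "Suc L \<le> L"
      by (rule longest[rule_format])
    then show ?thesis
      by simp
  qed
qed

lemma ex_cyclic_walk_in_cycle_space:
  assumes g: "graph V E ends" and F: "F \<in> cycle_space V E ends" "F \<noteq> {}"
  shows "\<exists>n p q. cyclic_walk ends n p q \<and> range q \<subseteq> F"
proof -
  have even: "F \<subseteq> E" "odd_vertices ends F = {}"
    using F g by (auto simp: cycle_space_iff)
  have "card {e\<in>F. v \<in> ends e} \<noteq> 1" for v
  proof
    assume "card {e\<in>F. v \<in> ends e} = 1"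
    then have "v \<in> odd_vertices ends F"
      unfolding odd_vertices_def by simp
    then show False
      using even(2) by simp
  qed
  then show ?thesis
    using ex_cyclic_walk_in[OF g even(1) F(2)] by blast
qed

section \<open>Shortcuts\<close>

lemma sd_le_edge_length:
  assumes "subgraph (fst H) (snd H) ends S" "connected_sg ends S" "A \<subseteq> fst S"
  shows "sd ends len H A \<le> ereal (edge_length len (snd S))"
  unfolding sd_def by (rule Inf_lower) (use assms in blast)

lemma sd_le_sd_subgraph:
  assumes "subgraph V E ends H"
  shows "sd ends len (V, E) A \<le> sd ends len H A"
  unfolding sd_def
proof (rule Inf_superset_mono, intro subsetI)
  fix x assume "x \<in> {ereal (edge_length len (snd S)) |S.
    subgraph (fst H) (snd H) ends S \<and> connected_sg ends S \<and> A \<subseteq> fst S}"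
  then obtain S where "x = ereal (edge_length len (snd S))" "subgraph (fst H) (snd H) ends S"
    "connected_sg ends S" "A \<subseteq> fst S"
    by blast
  moreover have "subgraph V E ends S"
    using assms calculation(2) unfolding subgraph_def by auto
  ultimately show "x \<in> {ereal (edge_length len (snd S)) |S.
    subgraph (fst (V, E)) (snd (V, E)) ends S \<and> connected_sg ends S \<and> A \<subseteq> fst S}"
    by (simp only: fst_conv snd_conv) blast
qed

definition shortcut :: "'v set \<Rightarrow> 'e set \<Rightarrow> ('e \<Rightarrow> 'v set) \<Rightarrow> ('e \<Rightarrow> real) \<Rightarrow> 'v set \<times> 'e set
    \<Rightarrow> 'v set \<Rightarrow> 'v set \<times> 'e set \<Rightarrow> bool" where
  "shortcut V E ends len H A S \<longleftrightarrow> subgraph V E ends S \<and> connected_sg ends S \<and> A \<subseteq> fst S \<and>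
     (\<forall>S'. subgraph (fst H) (snd H) ends S' \<and> connected_sg ends S' \<and> A \<subseteq> fst S'
        \<longrightarrow> edge_length len (snd S) < edge_length len (snd S'))"

lemma ex_shortcut_if_not_fully_geodesic:
  assumes "subgraph V E ends H" "\<not> fully_geodesic V E ends len H"
  shows "\<exists>A S. A \<subseteq> fst H \<and> shortcut V E ends len H A S"
proof -
  obtain A where A: "A \<subseteq> fst H" "sd ends len H A \<noteq> sd ends len (V, E) A"
    using assms unfolding fully_geodesic_def k_geodesic_def by blast
  then have "sd ends len (V, E) A < sd ends len H A"
    using sd_le_sd_subgraph[OF assms(1)] by (simp add: order_less_le)
  then obtain S where S: "subgraph V E ends S" "connected_sg ends S" "A \<subseteq> fst S"
    and shorter: "ereal (edge_length len (snd S)) < sd ends len H A"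
    unfolding sd_def Inf_less_iff by auto
  have "edge_length len (snd S) < edge_length len (snd S')"
    if "subgraph (fst H) (snd H) ends S'" "connected_sg ends S'" "A \<subseteq> fst S'" for S'
  proof -
    have "ereal (edge_length len (snd S)) < ereal (edge_length len (snd S'))"
      using shorter sd_le_edge_length[OF that, where len = len] by (rule order.strict_trans2)
    then show ?thesis
      by simp
  qed
  then show ?thesis
    using A S unfolding shortcut_def by blast
qed

lemma shortcut_nonempty:
  assumes "shortcut V E ends len H A S" "v \<in> fst H" "\<forall>e\<in>E. 0 < len e"
  shows "A \<noteq> {}"
proof
  assume "A = {}"
  have "subgraph (fst H) (snd H) ends ({v}, {})" "connected_sg ends ({v}, {})"
    using assms(2) unfolding subgraph_def connected_sg_def by auto
  then have "edge_length len (snd S) < edge_length len {}"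
    using assms(1) \<open>A = {}\<close> unfolding shortcut_def by fastforce
  moreover have "0 \<le> edge_length len (snd S)"
    using assms(1,3) unfolding shortcut_def subgraph_def by (intro edge_length_nonneg) blast
  ultimately show False
    by (simp add: edge_length_def)
qed

lemma ex_join_in_connected:
  assumes g: "graph V E ends" and S: "subgraph V E ends S" "connected_sg ends S"
    and xy: "x \<in> fst S" "y \<in> fst S"
  shows "\<exists>Q\<subseteq>snd S. odd_vertices ends Q = sym_diff {x} {y}"
proof -
  have fin: "finite (snd S)"
    using g S unfolding graph_def subgraph_def by (auto intro: finite_subset)
  define R where "R = {z\<in>fst S. \<exists>Q\<subseteq>snd S. odd_vertices ends Q = sym_diff {x} {z}}"
  have "x \<in> R"
    unfolding R_def using xy by (intro CollectI conjI exI[of _ "{}"]) auto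
  have "R = fst S"
  proof (rule ccontr)
    assume "R \<noteq> fst S"
    moreover have "R \<subseteq> fst S"
      unfolding R_def by blast
    ultimately have "R \<noteq> {} \<and> R \<subset> fst S"
      using \<open>x \<in> R\<close> by blast
    then obtain f where f: "f \<in> snd S" "ends f \<inter> R \<noteq> {}" "ends f - R \<noteq> {}"
      using S(2) unfolding connected_sg_def by blast
    then obtain z z' where z: "z \<in> ends f" "z \<in> R" and z': "z' \<in> ends f" "z' \<notin> R"
      by blast
    have "f \<in> E"
      using S f unfolding subgraph_def by blast
    then obtain w where "ends f = {z, w}" "w \<noteq> z"
      using graph_other_end[OF g _ z(1)] by blast
    then have ends_f: "ends f = {z, z'}"
      using z z' by auto
    obtain Q where Q: "Q \<subseteq> snd S" "odd_vertices ends Q = sym_diff {x} {z}"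
      using z unfolding R_def by blast
    have "odd_vertices ends (sym_diff Q {f}) = sym_diff (sym_diff {x} {z}) (ends f)"
      using Q fin by (simp add: odd_vertices_sym_diff odd_vertices_singleton finite_subset)
    also have "\<dots> = sym_diff {x} {z'}"
      unfolding ends_f using z z' by auto
    finally have "z' \<in> R"
      unfolding R_def using Q f S z' unfolding subgraph_def
      by (intro CollectI conjI exI[of _ "sym_diff Q {f}"]) auto
    then show False
      using z' by blast
  qed
  then have "y \<in> R"
    using xy by simp
  then show ?thesis
    unfolding R_def by blast
qed

section \<open>Cycles with a shortcut\<close>

locale cycle_shortcut = cyclic_walk +
  fixes V :: "'v set" and E :: "'e set" and len :: "'e \<Rightarrow> real"
    and A :: "'v set" and S :: "'v set \<times> 'e set"
  assumes graph: "graph V E ends"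
    and len_pos: "\<forall>e\<in>E. 0 < len e"
    and edges_subset: "range q \<subseteq> E"
    and shortcut: "shortcut V E ends len (range p, range q) A S"
    and A_subset: "A \<subseteq> range p"
    and base_in_A: "p 0 \<in> A"
begin

lemma shortcut_subgraph: "subgraph V E ends S" "connected_sg ends S" "A \<subseteq> fst S"
  using shortcut unfolding shortcut_def by auto

lemma shortcut_shorter:
  "subgraph (range p) (range q) ends S' \<Longrightarrow> connected_sg ends S' \<Longrightarrow> A \<subseteq> fst S'
    \<Longrightarrow> edge_length len (snd S) < edge_length len (snd S')"
  using shortcut unfolding shortcut_def fst_conv snd_conv by blast

lemma shortcut_edges: "snd S \<subseteq> E" "finite (snd S)"
  using shortcut_subgraph(1) graph unfolding subgraph_def graph_def by (auto intro: finite_subset)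

lemma edge_length_window:
  "b \<le> a + n \<Longrightarrow> edge_length len (q ` {a..<b}) = (\<Sum>i=a..<b. len (q i))"
  unfolding edge_length_def using inj_on_edge_window by (simp add: sum.reindex)

lemma shortcut_shorter_than_cycle: "edge_length len (snd S) < edge_length len (range q)"
  using shortcut_shorter[of "(range p, range q)"] connected A_subset ends_edge
  unfolding subgraph_def by auto

text \<open>The complementary arc from \<open>p e\<close> round to \<open>p (s + n) = p s\<close> is a connected
  subgraph of the cycle containing \<open>A\<close>, hence longer than the shortcut.\<close>

lemma arc_plus_shortcut_less:
  assumes se: "s < e" "e \<le> n" and no_A: "\<forall>i. s < i \<and> i < e \<longrightarrow> p i \<notin> A"
  shows "edge_length len (q ` {s..<e}) + edge_length len (snd S) < edge_length len (range q)"
proof -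
  define L where "L = s + n - e"
  have eL: "e + L = s + n"
    unfolding L_def using se by simp
  let ?S' = "(p ` {e..e+L}, q ` {e..<e+L})"
  have "subgraph (range p) (range q) ends ?S'"
    unfolding subgraph_def using ends_edge by auto
  moreover have "connected_sg ends ?S'"
    using walk_connected[of ends q p e L] ends_edge by blast
  moreover have "A \<subseteq> fst ?S'"
  proof
    fix a assume "a \<in> A"
    then obtain i where i: "i < n" "a = p i"
      using A_subset range_vertex_window[of 0] by auto
    show "a \<in> fst ?S'"
    proof (cases "i \<le> s")
      case True
      then have "i + n \<in> {e..e+L}"
        using eL se by auto
      moreover have "p (i + n) = p i"
        by (simp add: vertex_eq_iff)
      ultimately have "p i \<in> p ` {e..e+L}"
        by (metis image_eqI)
      then show ?thesis
        using i by simp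
    next
      case False
      then have "i \<in> {e..e+L}"
        using no_A \<open>a \<in> A\<close> i eL by (auto simp: not_le)
      then show ?thesis
        using i by simp
    qed
  qed
  ultimately have "edge_length len (snd S) < edge_length len (snd ?S')"
    by (rule shortcut_shorter)
  moreover have "edge_length len (q ` {s..<e}) + edge_length len (q ` {e..<e+L})
      = edge_length len (range q)"
    using se eL edge_length_window sum.atLeastLessThan_concat[of s e "s+n" "\<lambda>i. len (q i)"]
      range_edge_window[of s] by simp
  ultimately show ?thesis
    by simp
qed

context
  fixes W :: "'e set set"
  assumes W_sym_diff: "\<And>X Y. X \<in> W \<Longrightarrow> Y \<in> W \<Longrightarrow> sym_diff X Y \<in> W"
    and W_shorter: "\<And>F. F \<subseteq> E \<Longrightarrow> odd_vertices ends F = {}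
      \<Longrightarrow> edge_length len F < edge_length len (range q) \<Longrightarrow> F \<in> W"
begin

lemma arc_join_in:
  assumes se: "s < e" "e \<le> n" and no_A: "\<forall>i. s < i \<and> i < e \<longrightarrow> p i \<notin> A"
    and ends_A: "p s \<in> A" "p e \<in> A"
  shows "\<exists>Q\<subseteq>snd S. odd_vertices ends Q = sym_diff {p s} {p e} \<and> sym_diff (q ` {s..<e}) Q \<in> W"
proof -
  have in_S: "p s \<in> fst S" "p e \<in> fst S"
    using ends_A shortcut_subgraph(3) by auto
  obtain Q where Q: "Q \<subseteq> snd S" "odd_vertices ends Q = sym_diff {p s} {p e}"
    using ex_join_in_connected[OF graph shortcut_subgraph(1,2) in_S] by blast
  have fin: "finite (q ` {s..<e})" "finite Q"
    using Q(1) shortcut_edges(2) by (auto intro: finite_subset)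
  have "inj_on q {s..<s + (e - s)}"
    using inj_on_edge_window se by simp
  from walk_odd_vertices[OF ends_edge vertex_neq_Suc this]
  have arc: "odd_vertices ends (q ` {s..<e}) = sym_diff {p s} {p e}"
    using se by simp
  have pos: "\<forall>f\<in>q ` {s..<e} \<union> snd S. 0 < len f"
    using edges_subset shortcut_edges(1) len_pos by blast
  have Q_le: "edge_length len Q \<le> edge_length len (snd S)"
    by (rule edge_length_mono) (use Q(1) shortcut_edges(2) pos in auto)
  have "edge_length len (sym_diff (q ` {s..<e}) Q) \<le> edge_length len (q ` {s..<e}) + edge_length len Q"
    by (rule edge_length_sym_diff_le) (use fin Q(1) pos in auto)
  also have "\<dots> \<le> edge_length len (q ` {s..<e}) + edge_length len (snd S)"
    using Q_le by simp
  also have "\<dots> < edge_length len (range q)"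
    using arc_plus_shortcut_less[OF se no_A] .
  finally have "sym_diff (q ` {s..<e}) Q \<in> W"
  proof (intro W_shorter)
    show "sym_diff (q ` {s..<e}) Q \<subseteq> E"
      using Q(1) shortcut_edges(1) edges_subset by blast
    show "odd_vertices ends (sym_diff (q ` {s..<e}) Q) = {}"
      using fin arc Q(2) by (simp add: odd_vertices_sym_diff)
  qed
  then show ?thesis
    using Q by blast
qed

lemma empty_in_W: "{} \<in> W"
proof -
  have "edge_length len {} < edge_length len (range q)"
    using edges_subset len_pos finite_edges by (intro edge_length_psubset) auto
  then show ?thesis
    by (intro W_shorter) auto
qed

lemma prefix_join_in:
  "t \<le> n \<Longrightarrow> p t \<in> A
    \<Longrightarrow> \<exists>J\<subseteq>snd S. odd_vertices ends J = sym_diff {p 0} {p t} \<and> sym_diff (q ` {0..<t}) J \<in> W"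
proof (induction t rule: less_induct)
  case (less t)
  show ?case
  proof (cases "t = 0")
    case True
    then show ?thesis
      using empty_in_W by (intro exI[of _ "{}"]) simp
  next
    case False
    obtain s where s: "s < t" "p s \<in> A" and no_A: "\<forall>i. s < i \<and> i < t \<longrightarrow> p i \<notin> A"
      using ex_last_before[of "\<lambda>i. p i \<in> A" t] base_in_A False by auto
    obtain J where J: "J \<subseteq> snd S" "odd_vertices ends J = sym_diff {p 0} {p s}"
      "sym_diff (q ` {0..<s}) J \<in> W"
      using less.IH[of s] s less.prems by auto
    obtain Q where Q: "Q \<subseteq> snd S" "odd_vertices ends Q = sym_diff {p s} {p t}"
      "sym_diff (q ` {s..<t}) Q \<in> W"
      using arc_join_in[OF s(1) less.prems(1) no_A s(2) less.prems(2)] by blast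
    have disj: "q ` {0..<s} \<inter> q ` {s..<t} = {}"
      using edge_windows_disjoint less.prems by simp
    have "{0..<s} \<union> {s..<t} = {0..<t}"
      using s(1) by (simp add: ivl_disj_un_two)
    then have split: "q ` {0..<t} = q ` {0..<s} \<union> q ` {s..<t}"
      by (metis image_Un)
    have "sym_diff (q ` {0..<t}) (sym_diff J Q)
        = sym_diff (sym_diff (q ` {0..<s}) J) (sym_diff (q ` {s..<t}) Q)"
      unfolding split by (rule sym_diff_Un_disjoint[OF disj])
    also have "\<dots> \<in> W"
      using J(3) Q(3) by (rule W_sym_diff)
    finally have "sym_diff (q ` {0..<t}) (sym_diff J Q) \<in> W" .
    moreover have "odd_vertices ends (sym_diff J Q) = sym_diff {p 0} {p t}"
    proof -
      have "finite J" "finite Q"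
        using J(1) Q(1) shortcut_edges(2) by (auto intro: finite_subset)
      then show ?thesis
        using J(2) Q(2) by (auto simp: odd_vertices_sym_diff)
    qed
    moreover have "sym_diff J Q \<subseteq> snd S"
      using J(1) Q(1) by blast
    ultimately show ?thesis
      by blast
  qed
qed

lemma edges_in_W: "range q \<in> W"
proof -
  obtain J where J: "J \<subseteq> snd S" "odd_vertices ends J = sym_diff {p 0} {p n}"
    "sym_diff (q ` {0..<n}) J \<in> W"
    using prefix_join_in[of n] base_in_A vertex_eq_iff[of n 0] by auto
  have J_in: "J \<in> W"
  proof (rule W_shorter)
    show "J \<subseteq> E" "odd_vertices ends J = {}"
      using J shortcut_edges vertex_eq_iff[of n 0] by auto
    have "edge_length len J \<le> edge_length len (snd S)"
      using J shortcut_edges len_pos by (auto intro!: edge_length_mono)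
    then show "edge_length len J < edge_length len (range q)"
      using shortcut_shorter_than_cycle by simp
  qed
  have "sym_diff (range q) J \<in> W"
    using J(3) range_edge_window[of 0] by simp
  from W_sym_diff[OF this J_in] have "sym_diff (sym_diff (range q) J) J \<in> W" .
  moreover have "sym_diff (sym_diff (range q) J) J = range q"
    by auto
  ultimately show ?thesis
    by (rule subst[where P = "\<lambda>X. X \<in> W", rotated])
qed

end

end

lemma (in cyclic_walk) edges_in_if_not_fully_geodesic:
  assumes g: "graph V E ends" and pos: "\<forall>e\<in>E. 0 < len e" and qE: "range q \<subseteq> E"
    and not_geodesic: "\<not> fully_geodesic V E ends len (range p, range q)"
    and W_sym_diff: "\<And>X Y. X \<in> W \<Longrightarrow> Y \<in> W \<Longrightarrow> sym_diff X Y \<in> W"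
    and W_shorter: "\<And>F. F \<subseteq> E \<Longrightarrow> odd_vertices ends F = {}
      \<Longrightarrow> edge_length len F < edge_length len (range q) \<Longrightarrow> F \<in> W"
  shows "range q \<in> W"
proof -
  have "subgraph V E ends (range p, range q)"
    using is_cycle_range[OF g qE] unfolding is_cycle_def by blast
  from ex_shortcut_if_not_fully_geodesic[OF this not_geodesic]
  obtain A S where A: "A \<subseteq> range p" and S: "shortcut V E ends len (range p, range q) A S"
    by auto
  have "A \<noteq> {}"
    using shortcut_nonempty[OF S _ pos, of "p 0"] by simp
  then obtain r where "p r \<in> A"
    using A by blast
  then have shifted: "cycle_shortcut ends n (\<lambda>i. p (i + r)) (\<lambda>i. q (i + r)) V E len A S"
    using shift g pos qE S A range_shift
    unfolding cycle_shortcut_def cycle_shortcut_axioms_def by simp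
  have W_shorter': "\<And>F. F \<subseteq> E \<Longrightarrow> odd_vertices ends F = {}
      \<Longrightarrow> edge_length len F < edge_length len (range (\<lambda>i. q (i + r))) \<Longrightarrow> F \<in> W"
    using W_shorter unfolding range_shift(2) .
  have "range (\<lambda>i. q (i + r)) \<in> W"
    using cycle_shortcut.edges_in_W[OF shifted W_sym_diff W_shorter'] .
  then show ?thesis
    using range_shift by simp
qed

section \<open>Generating the cycle space\<close>

lemma finite_measure_induct:
  fixes f :: "'a \<Rightarrow> 'b::linorder"
  assumes "finite S" "x \<in> S"
    and step: "\<And>x. x \<in> S \<Longrightarrow> (\<And>y. y \<in> S \<Longrightarrow> f y < f x \<Longrightarrow> P y) \<Longrightarrow> P x"
  shows "P x"
  using assms(2)
proof (induction "card {y\<in>S. f y < f x}" arbitrary: x rule: less_induct)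
  case less
  show ?case
  proof (rule step[OF less.prems])
    fix y assume y: "y \<in> S" "f y < f x"
    then have "{z\<in>S. f z < f y} \<subset> {z\<in>S. f z < f x}"
      by auto
    then have "card {z\<in>S. f z < f y} < card {z\<in>S. f z < f x}"
      using assms(1) by (intro psubset_card_mono) auto
    then show "P y"
      using less.hyps y(1) by blast
  qed
qed

lemma is_cycle_in_cycle_space:
  assumes g: "graph V E ends" and C: "is_cycle V E ends C"
  shows "snd C \<in> cycle_space V E ends"
proof -
  have sub: "snd C \<subseteq> E" "\<forall>e\<in>snd C. ends e \<subseteq> fst C"
    using C unfolding is_cycle_def subgraph_def by auto
  have "even (card {e\<in>snd C. v \<in> ends e})" for v
  proof (cases "v \<in> fst C")
    case False
    then have "{e\<in>snd C. v \<in> ends e} = {}"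
      using sub by auto
    then show ?thesis
      by (metis card.empty even_zero)
  qed (use C in \<open>simp add: is_cycle_def\<close>)
  then show ?thesis
    using sub unfolding cycle_space_def by auto
qed

lemma sym_span_cycles_subset_cycle_space:
  assumes "graph V E ends"
  shows "sym_span {snd C | C. is_cycle V E ends C \<and> P C} \<subseteq> cycle_space V E ends"
proof (rule sym_span_least)
  show "{snd C | C. is_cycle V E ends C \<and> P C} \<subseteq> cycle_space V E ends"
    using is_cycle_in_cycle_space[OF assms] by blast
  show "{} \<in> cycle_space V E ends"
    using assms by (simp add: cycle_space_iff)
qed (use cycle_space_sym_diff[OF assms] in blast)

lemma in_closure_if_proper_even_subset:
  assumes g: "graph V E ends" and pos: "\<forall>e\<in>E. 0 < len e"
    and F: "F \<in> cycle_space V E ends" and G: "G \<in> cycle_space V E ends" "G \<subset> F" "G \<noteq> {}"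
    and W_sym_diff: "\<And>X Y. X \<in> W \<Longrightarrow> Y \<in> W \<Longrightarrow> sym_diff X Y \<in> W"
    and W_shorter: "\<And>H. H \<in> cycle_space V E ends \<Longrightarrow> edge_length len H < edge_length len F \<Longrightarrow> H \<in> W"
  shows "F \<in> W"
proof -
  have fin: "finite F" "F \<subseteq> E"
    using F g unfolding cycle_space_def graph_def by (auto intro: finite_subset)
  then have "edge_length len G < edge_length len F" "edge_length len (F - G) < edge_length len F"
    using G pos by (auto intro!: edge_length_psubset)
  moreover have "F - G \<in> cycle_space V E ends"
    using cycle_space_sym_diff[OF g F G(1)] G(2) by (simp add: Diff_mono Un_absorb2)
  ultimately have "sym_diff G (F - G) \<in> W"
    using G(1) W_shorter by (intro W_sym_diff) auto
  moreover have "sym_diff G (F - G) = F"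
    using G(2) by auto
  ultimately show ?thesis
    by simp
qed

lemma cycle_space_element_in_closure:
  assumes g: "graph V E ends" and pos: "\<forall>e\<in>E. 0 < len e" and F: "F \<in> cycle_space V E ends"
    and W_empty: "{} \<in> W"
    and W_sym_diff: "\<And>X Y. X \<in> W \<Longrightarrow> Y \<in> W \<Longrightarrow> sym_diff X Y \<in> W"
    and W_geodesic: "\<And>C. is_cycle V E ends C \<Longrightarrow> fully_geodesic V E ends len C \<Longrightarrow> snd C \<in> W"
    and W_shorter: "\<And>H. H \<in> cycle_space V E ends \<Longrightarrow> edge_length len H < edge_length len F \<Longrightarrow> H \<in> W"
  shows "F \<in> W"
proof (cases "F = {}")
  case True
  then show ?thesis
    using W_empty by simp
next
  case False
  then obtain n p q where cw: "cyclic_walk ends n p q" and qF: "range q \<subseteq> F"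
    using ex_cyclic_walk_in_cycle_space[OF g F] by blast
  have FE: "F \<subseteq> E"
    using F g by (simp add: cycle_space_iff)
  have q_cs: "range q \<in> cycle_space V E ends"
    using qF FE g cyclic_walk.odd_vertices_edges[OF cw] by (auto simp: cycle_space_iff)
  show ?thesis
  proof (cases "range q = F")
    case False
    show ?thesis
      by (rule in_closure_if_proper_even_subset[OF g pos F q_cs _ _ W_sym_diff W_shorter])
        (use qF False in auto)
  next
    case True
    have cycle: "is_cycle V E ends (range p, range q)"
      using cyclic_walk.is_cycle_range[OF cw g] qF FE by blast
    show ?thesis
    proof (cases "fully_geodesic V E ends len (range p, range q)")
      case geodesic: True
      show ?thesis
        using W_geodesic[OF cycle geodesic] True by simp
    next
      case False
      have "range q \<in> W"
      proof (rule cyclic_walk.edges_in_if_not_fully_geodesic[OF cw g pos _ False W_sym_diff])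
        show "range q \<subseteq> E"
          using qF FE by blast
        fix H assume "H \<subseteq> E" "odd_vertices ends H = {}" "edge_length len H < edge_length len (range q)"
        then show "H \<in> W"
          using True by (intro W_shorter) (simp_all add: cycle_space_iff[OF g])
      qed
      then show ?thesis
        using True by simp
    qed
  qed
qed

lemma cycle_space_subset_sym_span_fully_geodesic:
  assumes g: "graph V E ends" and pos: "\<forall>e\<in>E. 0 < len e"
  shows "cycle_space V E ends \<subseteq> sym_span {snd C | C. is_cycle V E ends C \<and> fully_geodesic V E ends len C}"
    (is "_ \<subseteq> sym_span ?Gen")
proof
  have fin: "finite (cycle_space V E ends)"
    using g unfolding graph_def cycle_space_def by (auto intro: finite_subset[of _ "Pow E"])
  fix F assume "F \<in> cycle_space V E ends"
  then show "F \<in> sym_span ?Gen"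
  proof (rule finite_measure_induct[where f = "edge_length len" and P = "\<lambda>F. F \<in> sym_span ?Gen", OF fin])
    fix F assume F: "F \<in> cycle_space V E ends"
      and IH: "\<And>H. H \<in> cycle_space V E ends \<Longrightarrow> edge_length len H < edge_length len F \<Longrightarrow> H \<in> sym_span ?Gen"
    show "F \<in> sym_span ?Gen"
    proof (rule cycle_space_element_in_closure[OF g pos F sym_span_empty sym_span_sym_diff _ IH])
      fix C assume "is_cycle V E ends C" "fully_geodesic V E ends len C"
      then show "snd C \<in> sym_span ?Gen"
        by (intro sym_span_generator) blast
    qed
  qed
qed

theorem proposition7p1:
  fixes V :: "'v set" and E :: "'e set" and ends :: "'e \<Rightarrow> 'v set" and len :: "'e \<Rightarrow> real"
  assumes "graph V E ends"
    and "\<forall>e\<in>E. len e > 0"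
  shows "cycle_space V E ends =
    {sym_sum DD | DD. finite DD \<and>
       DD \<subseteq> {snd C | C. is_cycle V E ends C \<and> fully_geodesic V E ends len C}}"
proof -
  have "cycle_space V E ends = sym_span {snd C | C. is_cycle V E ends C \<and> fully_geodesic V E ends len C}"
    using sym_span_cycles_subset_cycle_space[OF assms(1)] cycle_space_subset_sym_span_fully_geodesic[OF assms]
    by (rule antisym[rotated])
  then show ?thesis
    unfolding sym_span_def .
qed

end
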